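(* Let $H(\mathbb{Z})=\langle a,b \mid [a,b]\text{ is central}\rangle$ be the integer Heisenberg group with generating set $S=\{a,b,a^{-1},b^{-1}\}$, and let $B_n$ be the ball of radius $n$ about $e$ in the word metric. There exists $\epsilon>0$ such that for all sufficiently large $n$, $$\epsilon<\frac{\#\{g\in B_n\smallsetminus\{e\}:\kappa(g)=0\}}{\#B_n}<1-\epsilon,$$ and the same two-sided bound holds with the condition $\kappa(g)=0$ replaced by $\kappa(g)>0$, and also with it replaced by $\kappa(g)<0$.
   Context: For a group $G$ with finite generating set $S$ ($S=S^{-1}$, $e\notin S$), $|x|$ denotes the word length of $x\in G$ with respect to $S$, and $B_n=\{g:|g|\le n\}$. For $g\in G$ define $\mathrm{Av}(g)=\frac{1}{|S|}\sum_{a\in S}|a^{-1}ga|$, and for $g\neq e$ define the curvature $\kappa(g)=\frac{|g|-\mathrm{Av}(g)}{|g|}$. *)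

theory Defs
  imports Complex_Main
begin

text \<open>Integer Heisenberg group, realised as upper unitriangular integer 3x3 matrices
  [[1,x,z],[0,1,y],[0,0,1]] encoded as triples (x,y,z).  This is the standard model of
  the presentation a,b with [a,b] central, via a = (1,0,0), b = (0,1,0).\<close>

type_synonym heis = "int \<times> int \<times> int"

definition hmul :: "heis \<Rightarrow> heis \<Rightarrow> heis" where
  "hmul g h = (case g of (x, y, z) \<Rightarrow> case h of (x', y', z') \<Rightarrow>
      (x + x', y + y', z + z' + x * y'))"

definition hone :: heis where "hone = (0, 0, 0)"

definition hinv :: "heis \<Rightarrow> heis" where
  "hinv g = (case g of (x, y, z) \<Rightarrow> (- x, - y, x * y - z))"

definition ha :: heis where "ha = (1, 0, 0)"
definition hb :: heis where "hb = (0, 1, 0)"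

definition hS :: "heis set" where
  "hS = {ha, hb, hinv ha, hinv hb}"

definition word_eval :: "heis list \<Rightarrow> heis" where
  "word_eval w = foldr hmul w hone"

definition wlen :: "heis \<Rightarrow> nat" where
  "wlen g = (LEAST n. \<exists>w. set w \<subseteq> hS \<and> length w = n \<and> word_eval w = g)"

definition ball :: "nat \<Rightarrow> heis set" where
  "ball n = {g. wlen g \<le> n}"

definition Av :: "heis \<Rightarrow> real" where
  "Av g = (\<Sum>s\<in>hS. real (wlen (hmul (hinv s) (hmul g s)))) / real (card hS)"

definition kappa :: "heis \<Rightarrow> real" where
  "kappa g = (real (wlen g) - Av g) / real (wlen g)"

end

theory Submission
  imports Defs
begin

text \<open>If \<open>0 \<le> x, y\<close>, \<open>2 max x y \<le> s\<close> and \<open>z\<close> lies in the band \<open>(s - 1)\<^sup>2 < 4 z \<le> s\<^sup>2\<close>, then the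
  word length of \<open>(x, y, z)\<close> is exactly \<open>2 s - x - y\<close>. The upper bound comes from an explicit word
  sweeping a rectangle; the lower bound from parity and the isoperimetric inequality
  \<open>16 z \<le> (|w| + x + y)\<^sup>2\<close>, which holds because \<open>z\<close> is the signed area swept by the path of \<open>w\<close>.
  Conjugating by a generator moves \<open>z\<close> by \<open>\<plusminus>x\<close> or \<open>\<plusminus>y\<close>, so the curvature is read off from the bands
  of the four neighbours: near the bottom of band \<open>s\<close> two of them drop to band \<open>s - 1\<close> (\<open>\<kappa> > 0\<close>),
  near the top two rise to band \<open>s + 1\<close> (\<open>\<kappa> < 0\<close>), in the middle none leaves it (\<open>\<kappa> = 0\<close>).
  Each of these three choices yields at least \<open>t\<^sup>4\<close> elements of \<open>B\<^sub>n\<close> for \<open>t \<approx> n/22\<close>, while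
  \<open>#B\<^sub>n = O(n\<^sup>4)\<close>, and the three classes are pairwise disjoint.\<close>

lemma hmul_simp [simp]: "hmul (x, y, z) (x', y', z') = (x + x', y + y', z + z' + x * y')"
  by (simp add: hmul_def)

lemma hmul_assoc: "hmul (hmul g h) k = hmul g (hmul h k)"
  by (cases g; cases h; cases k) (simp add: algebra_simps)

lemma hmul_hone_left [simp]: "hmul hone g = g"
  by (cases g) (simp add: hone_def)

lemma hS_eq: "hS = {(1, 0, 0), (0, 1, 0), (-1, 0, 0), (0, -1, 0)}"
  by (simp add: hS_def ha_def hb_def hinv_def)

lemma hS_cases:
  assumes "s \<in> hS"
  obtains (horizontal) e where "s = (e, 0, 0)" "e \<in> {-1, 1}"
    | (vertical) e where "s = (0, e, 0)" "e \<in> {-1, 1}"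
  using assms unfolding hS_eq by force

lemma word_eval_Nil [simp]: "word_eval [] = hone"
  by (simp add: word_eval_def)

lemma word_eval_Cons [simp]: "word_eval (s # w) = hmul s (word_eval w)"
  by (simp add: word_eval_def)

lemma word_eval_append: "word_eval (u @ v) = hmul (word_eval u) (word_eval v)"
  by (induction u) (simp_all add: hmul_assoc)

lemma word_eval_replicate_horizontal: "word_eval (replicate k (e, 0, 0)) = (int k * e, 0, 0)"
  by (induction k) (simp_all add: hone_def algebra_simps)

lemma word_eval_replicate_vertical: "word_eval (replicate k (0, e, 0)) = (0, int k * e, 0)"
  by (induction k) (simp_all add: hone_def algebra_simps)

lemma word_eval_replicate_commutator:
  "word_eval (concat (replicate k [(e, 0, 0), (0, f, 0), (- e, 0, 0), (0, - f, 0)])) = (0, 0, int k * e * f)"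
  by (induction k) (simp_all add: hone_def word_eval_append algebra_simps)

lemma exists_word: "\<exists>w. set w \<subseteq> hS \<and> word_eval w = g"
proof -
  obtain x y z where g: "g = (x, y, z)"
    by (cases g)
  define c where "c = z - x * y"
  define w :: "heis list" where "w = replicate (nat \<bar>x\<bar>) (sgn x, 0, 0) @ replicate (nat \<bar>y\<bar>) (0, sgn y, 0)
    @ concat (replicate (nat \<bar>c\<bar>) [(1, 0, 0), (0, sgn c, 0), (-1, 0, 0), (0, - sgn c, 0)])"
  have "word_eval w = g"
    by (simp add: w_def g c_def word_eval_append word_eval_replicate_horizontal
        word_eval_replicate_vertical word_eval_replicate_commutator abs_mult_sgn)
  moreover have "set w \<subseteq> hS"
    by (auto simp: w_def hS_eq sgn_if)
  ultimately show ?thesis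
    by blast
qed

lemma wlen_shortest_word: "\<exists>w. set w \<subseteq> hS \<and> word_eval w = g \<and> length w = wlen g"
proof -
  have "\<exists>w. set w \<subseteq> hS \<and> length w = wlen g \<and> word_eval w = g"
    unfolding wlen_def by (rule LeastI_ex) (use exists_word in blast)
  then show ?thesis
    by blast
qed

lemma wlen_le_length: "set w \<subseteq> hS \<Longrightarrow> wlen (word_eval w) \<le> length w"
  unfolding wlen_def by (rule Least_le) blast

definition word_x :: "heis list \<Rightarrow> int" where "word_x w = fst (word_eval w)"
definition word_y :: "heis list \<Rightarrow> int" where "word_y w = fst (snd (word_eval w))"
definition word_z :: "heis list \<Rightarrow> int" where "word_z w = snd (snd (word_eval w))"

lemma word_eval_coords: "word_eval w = (word_x w, word_y w, word_z w)"
  by (simp add: word_x_def word_y_def word_z_def)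

lemma word_coords_Nil [simp]: "word_x [] = 0" "word_y [] = 0" "word_z [] = 0"
  by (simp_all add: word_x_def word_y_def word_z_def hone_def)

lemma word_coords_Cons [simp]:
  "word_x ((dx, dy, 0) # w) = dx + word_x w"
  "word_y ((dx, dy, 0) # w) = dy + word_y w"
  "word_z ((dx, dy, 0) # w) = word_z w + dx * word_y w"
  by (cases "word_eval w"; simp add: word_x_def word_y_def word_z_def)+

definition hcount :: "heis list \<Rightarrow> nat" where "hcount w = length (filter (\<lambda>s. fst s \<noteq> 0) w)"
definition vcount :: "heis list \<Rightarrow> nat" where "vcount w = length (filter (\<lambda>s. fst s = 0) w)"

lemma hcount_add_vcount: "hcount w + vcount w = length w"
  using sum_length_filter_compl[of "\<lambda>s. fst s \<noteq> 0" w] by (simp add: hcount_def vcount_def)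

lemma word_xy_bound: "set w \<subseteq> hS \<Longrightarrow> \<bar>word_x w\<bar> + \<bar>word_y w\<bar> \<le> int (length w)"
  by (induction w) (auto elim!: hS_cases)

lemma word_parity: "set w \<subseteq> hS \<Longrightarrow> even (int (length w) + word_x w + word_y w)"
proof (induction w)
  case (Cons s w)
  then have "even (int (length w) + word_x w + word_y w)"
    by simp
  moreover from Cons.prems have "s \<in> hS"
    by simp
  ultimately show ?case
    by (elim hS_cases) auto
qed simp

lemma word_z_bound: "set w \<subseteq> hS \<Longrightarrow> \<bar>word_z w\<bar> \<le> int (length w) ^ 2"
proof (induction w)
  case (Cons s w)
  then have IH: "\<bar>word_z w\<bar> \<le> int (length w) ^ 2" and s: "s \<in> hS"
    by simp_all
  have "\<bar>word_y w\<bar> \<le> int (length w)"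
    using word_xy_bound[of w] Cons.prems by simp
  then have "\<bar>word_z w\<bar> + \<bar>word_y w\<bar> \<le> int (length (s # w)) ^ 2"
    using IH by (simp add: power2_eq_square algebra_simps)
  with s show ?case
    by (elim hS_cases) (simp_all, auto simp: abs_le_iff)
qed simp

fun suffix_ymin :: "heis list \<Rightarrow> int" where
  "suffix_ymin [] = 0"
| "suffix_ymin (s # w) = min (word_y (s # w)) (suffix_ymin w)"

fun suffix_ymax :: "heis list \<Rightarrow> int" where
  "suffix_ymax [] = 0"
| "suffix_ymax (s # w) = max (word_y (s # w)) (suffix_ymax w)"

lemma suffix_ymin_le: "suffix_ymin w \<le> 0" "suffix_ymin w \<le> word_y w"
  by (induction w) auto

lemma suffix_ymax_ge: "0 \<le> suffix_ymax w" "word_y w \<le> suffix_ymax w"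
  by (induction w) auto

lemma suffix_y_spread:
  "set w \<subseteq> hS \<Longrightarrow> 2 * (suffix_ymax w - suffix_ymin w) \<le> int (vcount w) + \<bar>word_y w\<bar>"
proof (induction w)
  case (Cons s w)
  then have IH: "2 * (suffix_ymax w - suffix_ymin w) \<le> int (vcount w) + \<bar>word_y w\<bar>"
    and s: "s \<in> hS"
    by simp_all
  note range = suffix_ymin_le[of w] suffix_ymax_ge[of w]
  from s show ?case
  proof (cases rule: hS_cases)
    case (horizontal e)
    then show ?thesis
      using IH range by (simp add: vcount_def min_absorb2 max_absorb2)
  next
    case (vertical e)
    then show ?thesis
      using IH range by (auto simp: vcount_def min_def max_def)
  qed
qed simp

text \<open>Read from the right, a word adds its current height \<open>\<plusminus>y\<close> to \<open>z\<close> at each horizontal letter,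
  so \<open>z\<close> is a signed area, controlled by the range of heights the path visits.\<close>

lemma area_bound:
  assumes "set w \<subseteq> hS" "lo \<le> suffix_ymin w" "suffix_ymax w \<le> hi"
  shows "\<bar>2 * word_z w - (lo + hi) * word_x w\<bar> \<le> int (hcount w) * (hi - lo)"
  using assms
proof (induction w)
  case (Cons s w)
  then have IH: "\<bar>2 * word_z w - (lo + hi) * word_x w\<bar> \<le> int (hcount w) * (hi - lo)"
    and s: "s \<in> hS"
    by simp_all
  have "lo \<le> word_y w" "word_y w \<le> hi"
    using Cons.prems suffix_ymin_le[of w] suffix_ymax_ge[of w] by auto
  from s show ?case
  proof (cases rule: hS_cases)
    case (horizontal e)
    have "2 * word_z (s # w) - (lo + hi) * word_x (s # w)
        = (2 * word_z w - (lo + hi) * word_x w) + e * (2 * word_y w - lo - hi)"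
      using horizontal by (simp add: algebra_simps)
    then show ?thesis
      using horizontal IH \<open>lo \<le> word_y w\<close> \<open>word_y w \<le> hi\<close>
      by (auto simp: hcount_def algebra_simps)
  next
    case (vertical e)
    then show ?thesis
      using IH by (simp add: hcount_def)
  qed
qed simp

lemma isoperimetric:
  assumes w: "set w \<subseteq> hS" "word_eval w = (x, y, z)" and "0 \<le> x" "0 \<le> y"
  shows "16 * z \<le> (int (length w) + x + y)^2"
proof -
  define lo where "lo = suffix_ymin w"
  define hi where "hi = suffix_ymax w"
  have coords: "word_x w = x" "word_y w = y" "word_z w = z"
    using w(2) by (simp_all add: word_x_def word_y_def word_z_def)
  have "lo \<le> 0" "0 \<le> hi"
    unfolding lo_def hi_def using suffix_ymin_le suffix_ymax_ge by auto
  have spread: "2 * (hi - lo) \<le> int (vcount w) + y"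
    using suffix_y_spread[OF w(1)] coords \<open>0 \<le> y\<close> unfolding lo_def hi_def by simp
  have "2 * z - (lo + hi) * x \<le> int (hcount w) * (hi - lo)"
    using area_bound[OF w(1), of lo hi] coords unfolding lo_def hi_def by simp
  moreover have "(lo + hi) * x \<le> (hi - lo) * x"
    using \<open>lo \<le> 0\<close> \<open>0 \<le> x\<close> by (intro mult_right_mono) auto
  ultimately have "2 * z \<le> (hi - lo) * (x + int (hcount w))"
    by (simp add: algebra_simps)
  moreover have "(2 * (hi - lo)) * (x + int (hcount w)) \<le> (int (vcount w) + y) * (x + int (hcount w))"
    using spread \<open>0 \<le> x\<close> by (intro mult_right_mono) auto
  ultimately have "16 * z \<le> 4 * ((int (vcount w) + y) * (x + int (hcount w)))"
    by linarith
  also have "\<dots> \<le> (int (vcount w) + y + x + int (hcount w))^2"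
    using sum_squares_ge_zero[of "int (vcount w) + y - x - int (hcount w)" 0]
    by (simp add: power2_eq_square algebra_simps)
  also have "\<dots> = (int (length w) + x + y)^2"
    using hcount_add_vcount[of w] by (simp add: algebra_simps flip: of_nat_add)
  finally show ?thesis .
qed

definition level :: "int \<Rightarrow> int \<Rightarrow> bool" where
  "level s z \<longleftrightarrow> (s - 1)^2 < 4 * z \<and> 4 * z \<le> s^2"

lemma level_pos: "level s z \<Longrightarrow> 1 \<le> s"
  unfolding level_def by (simp add: power2_eq_square algebra_simps)

lemma level_unique:
  assumes "level s z" "level s' z"
  shows "s = s'"
proof -
  have less: False if "level r z" "level r' z" "r < r'" for r r'
  proof -
    have "r^2 \<le> (r' - 1)^2"
      using level_pos[OF that(1)] that(3) by (intro power_mono) auto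
    then show False
      using that(1,2) unfolding level_def by linarith
  qed
  show ?thesis
    using less[OF assms] less[OF assms(2,1)] by (meson linorder_neqE)
qed

lemma wlen_lower:
  assumes "0 \<le> x" "0 \<le> y" "(s - 1)^2 < 4 * z"
  shows "2 * s - x - y \<le> int (wlen (x, y, z))"
proof (rule ccontr)
  assume "\<not> ?thesis"
  obtain w where w: "set w \<subseteq> hS" "word_eval w = (x, y, z)" "length w = wlen (x, y, z)"
    using wlen_shortest_word by blast
  define m where "m = int (length w) + x + y"
  have "even m"
    using word_parity[OF w(1)] w(2) unfolding m_def by (simp add: word_x_def word_y_def)
  with \<open>\<not> ?thesis\<close> have "m \<le> 2 * s - 2"
    unfolding m_def w(3) by presburger
  moreover have "0 \<le> m"
    unfolding m_def using assms by simp
  ultimately have "m^2 \<le> (2 * s - 2)^2"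
    by (intro power_mono) auto
  moreover have "16 * z \<le> m^2"
    unfolding m_def by (rule isoperimetric[OF w(1,2) assms(1,2)])
  ultimately show False
    using assms(3) by (simp add: power2_eq_square algebra_simps)
qed

lemma word_of_rectangle:
  fixes p q :: nat
  assumes "0 \<le> z" "z \<le> int p * int q"
  shows "\<exists>w. set w \<subseteq> hS \<and> length w = p + q \<and> word_eval w = (int p, int q, z)"
proof (cases "z = int p * int q")
  case True
  let ?w = "replicate p (1, 0, 0) @ replicate q (0, 1, 0)"
  have "word_eval ?w = (int p, int q, z)"
    using True by (simp add: word_eval_append word_eval_replicate_horizontal word_eval_replicate_vertical)
  then show ?thesis
    by (intro exI[of _ ?w]) (auto simp: hS_eq)
next
  case False
  with assms have "z < int p * int q"
    by simp
  with assms(1) have "0 < q"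
    by (cases q) auto
  define k where "k = z div int q"
  define r where "r = z mod int q"
  have z: "z = k * int q + r" and r: "0 \<le> r" "r < int q"
    unfolding k_def r_def using \<open>0 < q\<close> by auto
  have k: "0 \<le> k" "k < int p"
  proof -
    show "0 \<le> k"
      unfolding k_def using assms \<open>0 < q\<close> by (simp add: pos_imp_zdiv_nonneg_iff)
    show "k < int p"
    proof (rule ccontr)
      assume "\<not> k < int p"
      then have "int p * int q \<le> k * int q"
        by (intro mult_right_mono) auto
      with z r \<open>z < int p * int q\<close> show False
        by linarith
    qed
  qed
  \<comment> \<open>The area under this staircase is \<open>k (q - r) + (k + 1) r = z\<close>.\<close>
  define w :: "heis list" where
    "w = replicate (nat k) (1, 0, 0) @ replicate (nat (int q - r)) (0, 1, 0) @ [(1, 0, 0)]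
       @ replicate (nat r) (0, 1, 0) @ replicate (nat (int p - k - 1)) (1, 0, 0)"
  have "word_eval w = (int p, int q, z)"
    unfolding w_def z using k r
    by (simp add: word_eval_append word_eval_replicate_horizontal word_eval_replicate_vertical
        hone_def algebra_simps)
  then show ?thesis
    using k r by (intro exI[of _ w]) (auto simp: w_def hS_eq)
qed

lemma wlen_upper:
  assumes "0 \<le> x" "0 \<le> y" "2 * max x y \<le> s" "0 \<le> z" "4 * z \<le> s^2"
  shows "int (wlen (x, y, z)) \<le> 2 * s - x - y"
proof -
  obtain p q where pq: "p + q = s" "\<bar>p - q\<bar> \<le> 1" "x \<le> p" "y \<le> q"
  proof (cases "x \<le> y")
    case True
    then show ?thesis
      using assms by (intro that[of "s div 2" "s - s div 2"]) auto
  next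
    case False
    then show ?thesis
      using assms by (intro that[of "s - s div 2" "s div 2"]) auto
  qed
  have "s^2 = 4 * (p * q) + (p - q)^2"
    unfolding pq(1)[symmetric] by (simp add: power2_eq_square algebra_simps)
  moreover have "(p - q)^2 \<le> 1"
    using pq(2) by (simp add: abs_square_le_1)
  ultimately have "z \<le> int (nat p) * int (nat q)"
    using assms pq by simp
  then obtain w0 where w0: "set w0 \<subseteq> hS" "length w0 = nat p + nat q" "word_eval w0 = (p, q, z)"
    using word_of_rectangle[of z "nat p" "nat q"] assms pq by auto
  define w :: "heis list" where
    "w = replicate (nat (q - y)) (0, -1, 0) @ w0 @ replicate (nat (p - x)) (-1, 0, 0)"
  have "word_eval w = (x, y, z)"
    unfolding w_def using pq w0(3)
    by (simp add: word_eval_append word_eval_replicate_horizontal word_eval_replicate_vertical)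
  moreover have "set w \<subseteq> hS"
    unfolding w_def using w0(1) by (auto simp: hS_eq)
  ultimately have "wlen (x, y, z) \<le> length w"
    using wlen_le_length by metis
  moreover have "int (length w) = 2 * s - x - y"
    unfolding w_def using w0(2) pq assms by simp
  ultimately show ?thesis
    by linarith
qed

lemma wlen_level:
  assumes "0 \<le> x" "0 \<le> y" "2 * max x y \<le> s" "level s z"
  shows "int (wlen (x, y, z)) = 2 * s - x - y"
proof -
  have "0 \<le> z"
    using assms(4) unfolding level_def by (smt (verit) zero_le_power2)
  then show ?thesis
    using assms wlen_lower wlen_upper unfolding level_def by (meson order.antisym)
qed

lemma Av_conj:
  "Av (x, y, z) = (real (wlen (x, y, z + x)) + real (wlen (x, y, z - x))
     + real (wlen (x, y, z + y)) + real (wlen (x, y, z - y))) / 4"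
  unfolding Av_def hS_eq by (simp add: hinv_def algebra_simps)

lemma kappa_levels:
  assumes "0 \<le> x" "0 \<le> y" "\<forall>r \<in> {s, s1, s2, s3, s4}. 2 * max x y \<le> r"
    and "level s z" "level s1 (z + x)" "level s2 (z - x)" "level s3 (z + y)" "level s4 (z - y)"
  shows "kappa (x, y, z) = real_of_int (4 * s - (s1 + s2 + s3 + s4)) / real_of_int (2 * (2 * s - x - y))"
proof -
  have len: "real (wlen (x, y, z')) = 2 * r - x - y" if "r \<in> {s, s1, s2, s3, s4}" "level r z'" for r z'
  proof -
    have "int (wlen (x, y, z')) = 2 * r - x - y"
      using wlen_level[OF assms(1,2)] assms(3) that by blast
    then show ?thesis
      by (metis of_int_of_nat_eq of_int_diff of_int_mult of_int_numeral)
  qed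
  have Av: "Av (x, y, z) = ((2 * s1 - x - y) + (2 * s2 - x - y) + (2 * s3 - x - y) + (2 * s4 - x - y)) / 4"
    unfolding Av_conj
    using len[of s1 "z + x"] len[of s2 "z - x"] len[of s3 "z + y"] len[of s4 "z - y"] assms(5-8)
    by simp
  have wlen: "real (wlen (x, y, z)) = 2 * s - x - y"
    using len[of s z] assms(4) by simp
  have "2 * s - x - y \<noteq> 0"
    using assms(3) level_pos[OF assms(4)] by (simp add: max_def split: if_splits)
  then show ?thesis
    unfolding kappa_def Av wlen by (simp add: field_simps)
qed

definition samples :: "int \<Rightarrow> (int \<times> int \<times> int \<times> int) set" where
  "samples t = {t..2 * t} \<times> {t..2 * t} \<times> {11 * t..12 * t - 1} \<times> {0..t - 2}"

text \<open>Heights near the bottom, in the middle and near the top of band \<open>s\<close>. For sample points the moves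
  \<open>\<plusminus>x, \<plusminus>y\<close> lie between \<open>t\<close> and \<open>2 t\<close>, which sends two of the four neighbours to band \<open>s - 1\<close>,
  none out of band \<open>s\<close>, and two to band \<open>s + 1\<close>, respectively.\<close>

definition z_bottom :: "int \<Rightarrow> int \<Rightarrow> int" where
  "z_bottom s j = (s - 1)^2 div 4 + 1 + j"

definition z_middle :: "int \<Rightarrow> int \<Rightarrow> int \<Rightarrow> int" where
  "z_middle t s j = (s - 1)^2 div 4 + 2 * t + 1 + j"

definition z_top :: "int \<Rightarrow> int \<Rightarrow> int" where
  "z_top s j = s^2 div 4 - j"

locale sample_point =
  fixes t x y s j :: int
  assumes sample: "(x, y, s, j) \<in> samples t"
begin

lemma ranges: "t \<le> x" "x \<le> 2 * t" "t \<le> y" "y \<le> 2 * t" "11 * t \<le> s" "s \<le> 12 * t - 1" "0 \<le> j" "j \<le> t - 2"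
  using sample by (auto simp: samples_def)

lemma square_bounds:
  "(s - 1)^2 - 3 \<le> 4 * ((s - 1)^2 div 4)" "4 * ((s - 1)^2 div 4) \<le> (s - 1)^2"
  "s^2 - 3 \<le> 4 * (s^2 div 4)" "4 * (s^2 div 4) \<le> s^2"
  "s^2 = (s - 1)^2 + 2 * s - 1" "(s + 1)^2 = (s - 1)^2 + 4 * s"
  "(s - 1 - 1)^2 = (s - 1)^2 - 2 * s + 3" "(s + 1 - 1)^2 = s^2"
  by (auto simp: power2_eq_square algebra_simps)

lemma twice_max_le: "\<forall>r \<in> {s - 1, s, s + 1}. 2 * max x y \<le> r"
  using ranges by auto

lemma curvature_at_bottom: "level s (z_bottom s j)" "0 < kappa (x, y, z_bottom s j)"
proof -
  let ?z = "z_bottom s j"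
  have levels: "level s ?z" "level s (?z + x)" "level (s - 1) (?z - x)" "level s (?z + y)" "level (s - 1) (?z - y)"
    unfolding level_def z_bottom_def ring_distribs using square_bounds ranges by (intro conjI; linarith)+
  then show "level s ?z"
    by simp
  have "kappa (x, y, ?z) = real_of_int (4 * s - (s + (s - 1) + s + (s - 1))) / real_of_int (2 * (2 * s - x - y))"
    by (rule kappa_levels) (use levels ranges twice_max_le in auto)
  then show "0 < kappa (x, y, ?z)"
    using ranges by simp
qed

lemma curvature_at_middle: "level s (z_middle t s j)" "kappa (x, y, z_middle t s j) = 0"
proof -
  let ?z = "z_middle t s j"
  have levels: "level s ?z" "level s (?z + x)" "level s (?z - x)" "level s (?z + y)" "level s (?z - y)"
    unfolding level_def z_middle_def ring_distribs using square_bounds ranges by (intro conjI; linarith)+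
  then show "level s ?z"
    by simp
  have "kappa (x, y, ?z) = real_of_int (4 * s - (s + s + s + s)) / real_of_int (2 * (2 * s - x - y))"
    by (rule kappa_levels) (use levels ranges twice_max_le in auto)
  then show "kappa (x, y, ?z) = 0"
    by simp
qed

lemma curvature_at_top: "level s (z_top s j)" "kappa (x, y, z_top s j) < 0"
proof -
  let ?z = "z_top s j"
  have levels: "level s ?z" "level (s + 1) (?z + x)" "level s (?z - x)" "level (s + 1) (?z + y)" "level s (?z - y)"
    unfolding level_def z_top_def ring_distribs using square_bounds ranges by (intro conjI; linarith)+
  then show "level s ?z"
    by simp
  have "kappa (x, y, ?z) = real_of_int (4 * s - ((s + 1) + s + (s + 1) + s)) / real_of_int (2 * (2 * s - x - y))"
    by (rule kappa_levels) (use levels ranges twice_max_le in auto)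
  then show "kappa (x, y, ?z) < 0"
    using ranges by (simp add: divide_neg_pos)
qed

lemma mem_ball:
  assumes "level s z" "22 * t \<le> int n"
  shows "(x, y, z) \<in> ball n - {hone}"
proof -
  have "int (wlen (x, y, z)) = 2 * s - x - y"
    using wlen_level[of x y s z] assms(1) ranges twice_max_le by auto
  then have "wlen (x, y, z) \<le> n"
    using assms(2) ranges by linarith
  moreover have "x \<noteq> 0"
    using ranges by linarith
  ultimately show ?thesis
    by (simp add: ball_def hone_def)
qed

end

lemma card_samples_ge: "2 \<le> t \<Longrightarrow> t^4 \<le> int (card (samples t))"
proof -
  assume "2 \<le> t"
  then have "int (card (samples t)) = t^4 + t * (t * t - t - 1)"
    by (simp add: samples_def card_cartesian_product power4_eq_xxxx algebra_simps)
  moreover have "0 \<le> t * (t * t - t - 1)"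
    using \<open>2 \<le> t\<close> mult_right_mono[of 2 t t] by (intro mult_nonneg_nonneg) auto
  ultimately show ?thesis
    by linarith
qed

lemma card_samples_le:
  assumes "finite A"
    and F: "\<And>x y s j. (x, y, s, j) \<in> samples t \<Longrightarrow> (x, y, F s j) \<in> A \<and> level s (F s j)"
    and inj: "\<And>s. inj (F s)"
  shows "card (samples t) \<le> card A"
proof (rule card_inj_on_le)
  have "s = s' \<and> j = j'"
    if "(x, y, s, j) \<in> samples t" "(x', y', s', j') \<in> samples t" "F s j = F s' j'" for x y s j x' y' s' j'
  proof -
    have "s = s'"
      using F[OF that(1)] F[OF that(2)] that(3) level_unique by metis
    then show ?thesis
      using that(3) inj by (simp add: inj_eq)
  qed
  then show "inj_on (\<lambda>(x, y, s, j). (x, y, F s j)) (samples t)"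
    by (auto intro!: inj_onI)
qed (use assms in auto)

lemma ball_subset_box: "ball n \<subseteq> {- int n..int n} \<times> {- int n..int n} \<times> {- ((int n)^2) .. (int n)^2}"
proof
  fix g
  assume "g \<in> ball n"
  obtain w where w: "set w \<subseteq> hS" "word_eval w = g" "length w = wlen g"
    using wlen_shortest_word by blast
  with \<open>g \<in> ball n\<close> have "int (length w) \<le> int n"
    by (simp add: ball_def)
  then have "int (length w)^2 \<le> (int n)^2"
    by (intro power_mono) auto
  then have "\<bar>word_x w\<bar> \<le> int n" "\<bar>word_y w\<bar> \<le> int n" "\<bar>word_z w\<bar> \<le> (int n)^2"
    using word_xy_bound[OF w(1)] word_z_bound[OF w(1)] \<open>int (length w) \<le> int n\<close> by linarith+
  then show "g \<in> {- int n..int n} \<times> {- int n..int n} \<times> {- ((int n)^2) .. (int n)^2}"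
    unfolding w(2)[symmetric] word_eval_coords by (simp add: abs_le_iff)
qed

lemma finite_ball: "finite (ball n)"
  by (rule finite_subset[OF ball_subset_box]) simp

lemma card_ball_le: "1 \<le> n \<Longrightarrow> card (ball n) \<le> 27 * n^4"
proof -
  assume "1 \<le> n"
  have "card (ball n) \<le> card ({- int n..int n} \<times> {- int n..int n} \<times> {- ((int n)^2) .. (int n)^2})"
    by (rule card_mono[OF _ ball_subset_box]) simp
  also have "\<dots> = (2 * n + 1) * ((2 * n + 1) * (2 * n^2 + 1))"
    by (simp add: card_cartesian_product nat_add_distrib nat_mult_distrib flip: of_nat_power)
  also have "\<dots> \<le> (3 * n) * ((3 * n) * (3 * n^2))"
    using \<open>1 \<le> n\<close> by (intro mult_mono add_mono) (auto simp: power2_eq_square)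
  also have "\<dots> = 27 * n^4"
    by (simp add: power4_eq_xxxx power2_eq_square)
  finally show ?thesis .
qed

lemma card_ball_le_card_samples:
  assumes "1 \<le> n" "2 \<le> t" "int n \<le> 23 * t"
  shows "real (card (ball n)) \<le> 27 * 23 ^ 4 * real (card (samples t))"
proof -
  have "real (card (ball n)) \<le> 27 * real n ^ 4"
    using of_nat_mono[OF card_ball_le[OF assms(1)]] by simp
  also have "\<dots> \<le> 27 * (23 * real_of_int t) ^ 4"
    using assms(3) by (intro mult_left_mono power_mono) linarith+
  also have "\<dots> = 27 * 23 ^ 4 * real_of_int (t ^ 4)"
    by (simp add: power_mult_distrib)
  also have "\<dots> \<le> 27 * 23 ^ 4 * real_of_int (int (card (samples t)))"
    by (intro mult_left_mono) (simp_all only: of_int_le_iff card_samples_ge[OF assms(2)], simp)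
  finally show ?thesis
    by simp
qed

lemma card_samples_le_curvature_class:
  assumes t: "22 * t \<le> int n" and P: "P \<in> {(\<lambda>k::real. k = 0), (\<lambda>k. k > 0), (\<lambda>k. k < 0)}"
  shows "card (samples t) \<le> card {g \<in> ball n - {hone}. P (kappa g)}"
proof -
  obtain F where F: "\<And>x y s j. (x, y, s, j) \<in> samples t \<Longrightarrow> level s (F s j) \<and> P (kappa (x, y, F s j))"
    and inj: "\<And>s. inj (F s)"
  proof -
    from P consider "P = (\<lambda>k. k = 0)" | "P = (\<lambda>k. k > 0)" | "P = (\<lambda>k. k < 0)"
      by blast
    then show thesis
    proof cases
      case 1
      show thesis
        by (rule that[of "z_middle t"])
          (use 1 in \<open>auto simp: sample_point_def sample_point.curvature_at_middle inj_def\<close>, simp add: z_middle_def)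
    next
      case 2
      show thesis
        by (rule that[of z_bottom])
          (use 2 in \<open>auto simp: sample_point_def sample_point.curvature_at_bottom inj_def\<close>, simp add: z_bottom_def)
    next
      case 3
      show thesis
        by (rule that[of z_top])
          (use 3 in \<open>auto simp: sample_point_def sample_point.curvature_at_top inj_def\<close>, simp add: z_top_def)
    qed
  qed
  show ?thesis
  proof (rule card_samples_le)
    fix x y s j
    assume "(x, y, s, j) \<in> samples t"
    then show "(x, y, F s j) \<in> {g \<in> ball n - {hone}. P (kappa g)} \<and> level s (F s j)"
      using F sample_point.mem_ball[OF _ _ t] by (simp add: sample_point_def)
  qed (use inj finite_ball in auto)
qed

lemma card_ratio_bounds:
  fixes A B C :: "'a set" and m K :: real
  assumes "finite C" "A \<subseteq> C" "B \<subseteq> C" "A \<inter> B = {}"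
    and "m \<le> card A" "m \<le> card B" "card C \<le> K * m" "0 < m"
  shows "1 / (2 * K) < card A / card C \<and> card A / card C < 1 - 1 / (2 * K)"
proof -
  have "card A + card B \<le> card C"
    using assms(1-4) by (metis card_Un_disjoint card_mono finite_subset le_sup_iff)
  then have sum: "real (card A) + real (card B) \<le> card C"
    by linarith
  then have "0 < real (card C)" "0 < K * m"
    using assms(5-8) by linarith+
  then have "0 < K"
    using \<open>0 < m\<close> by (simp add: zero_less_mult_iff)
  with \<open>0 < real (card C)\<close> have "1 / (2 * K) < m / card C" "m / card C \<le> card A / card C" "m / card C \<le> card B / card C"
    using assms(5-8) by (auto simp: field_simps)
  moreover have "card A / card C + card B / card C \<le> 1"
    using sum \<open>0 < real (card C)\<close> by (simp add: field_simps)
  ultimately show ?thesis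
    by linarith
qed

theorem mainTheorem6:
  shows "\<exists>\<epsilon>::real. \<epsilon> > 0 \<and> (\<exists>N::nat. \<forall>n\<ge>N.
     (\<forall>P \<in> {(\<lambda>k::real. k = 0), (\<lambda>k. k > 0), (\<lambda>k. k < 0)}.
        \<epsilon> < real (card {g \<in> ball n - {hone}. P (kappa g)}) / real (card (ball n)) \<and>
        real (card {g \<in> ball n - {hone}. P (kappa g)}) / real (card (ball n)) < 1 - \<epsilon>))"
proof (intro exI[of _ "1 / (2 * (27 * 23 ^ 4))"] exI[of _ 484] conjI allI impI ballI)
  let ?K = "27 * 23 ^ 4 :: real"
  show "0 < 1 / (2 * ?K)"
    by simp
  fix n :: nat and P :: "real \<Rightarrow> bool"
  assume n: "484 \<le> n" and P: "P \<in> {(\<lambda>k. k = 0), (\<lambda>k. k > 0), (\<lambda>k. k < 0)}"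
  define t where "t = int (n div 22)"
  have t: "2 \<le> t" "22 * t \<le> int n" "int n \<le> 23 * t"
    using n by (auto simp: t_def)
  obtain P' where P': "P' \<in> {(\<lambda>k. k = 0), (\<lambda>k. k > 0), (\<lambda>k. k < 0)}" "\<And>k. P k \<Longrightarrow> \<not> P' k"
    using P by auto
  have large: "real (card (samples t)) \<le> card {g \<in> ball n - {hone}. Q (kappa g)}"
    if "Q \<in> {(\<lambda>k. k = 0), (\<lambda>k. k > 0), (\<lambda>k. k < 0)}" for Q
    using card_samples_le_curvature_class[OF t(2) that] by simp
  have "real (card (ball n)) \<le> ?K * card (samples t)"
    using card_ball_le_card_samples[of n t] n t by simp
  moreover have "0 < real (card (samples t))"
    using card_samples_ge[OF t(1)] t(1) by (smt (verit) of_nat_0_less_iff of_nat_less_0_iff zero_less_power)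
  ultimately show "1 / (2 * ?K) < real (card {g \<in> ball n - {hone}. P (kappa g)}) / real (card (ball n))"
    and "real (card {g \<in> ball n - {hone}. P (kappa g)}) / real (card (ball n)) < 1 - 1 / (2 * ?K)"
    using card_ratio_bounds[OF finite_ball _ _ _ large[OF P] large[OF P'(1)]] P'(2) by blast+
qed

end
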